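(* Let $Y$ be a topological space, $\mathcal X=(X_i)_{i\in I_Y}$ a family of nonempty spaces, and let $\widetilde Y$ be a space containing $Y$ as a dense subspace and, for each $i\in I_Y$, $\widetilde X_i$ a space containing $X_i$ as a subspace; put $\widetilde{\mathcal X}=(\widetilde X_i)_{i\in I_Y}$ (note $I_Y=I_{\widetilde Y}$). Then $Z(Y,\mathcal X)$ is a subspace of $Z(\widetilde Y,\widetilde{\mathcal X})$ and \[ \mathrm{Compl}\big(Z(Y,\mathcal X),Z(\widetilde Y,\widetilde{\mathcal X})\big)=\max\Big\{\mathrm{Compl}(Y,\widetilde Y),\ \sup_{i\in I_Y}\mathrm{Compl}(X_i,\widetilde X_i)\Big\}, \] whenever at least one of the two sides is defined (in which case both are).
   Context: All spaces are Tychonoff. For a space $Y$, $I_Y$ denotes its set of isolated points and $Y'=Y\setminus I_Y$. Zoom space: for a space $Y$ and a family $\mathcal X=(X_i)_{i\in I_Y}$ of nonempty pairwise disjoint spaces (disjoint from $Y'$), $Z(Y,\mathcal X)$ is the set $Y'\cup\bigcup_{i\in I_Y}X_i$ with the topology whose basis consists of all open subsets of the $X_i$, $i\in I_Y$, and all sets $V_U=(U\setminus I_Y)\cup\bigcup\{X_i: i\in U\cap I_Y\}$ for $U$ open in $Y$. $\mathcal F$-Borel hierarchy: $\mathcal F_0(Y)$ closed sets; for $0<\alpha<\omega_1$, $\mathcal F_\alpha(Y)$ is the family of countable unions (if $\alpha$ odd) or countable intersections (if $\alpha$ even) of members of $\bigcup_{\beta<\alpha}\mathcal F_\beta(Y)$,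 where $\lambda+m$ ($\lambda$ limit or 0, $m\in\omega$) has the parity of $m$; $\mathcal F_{\omega_1}(Y)$ is the family of Suslin-$\mathcal F$ sets $\bigcup_{\sigma\in\omega^\omega}\bigcap_k F_{\sigma(0),\dots,\sigma(k)}$ ($F_{\dots}$ closed). For $A\subset B$, $\mathrm{Compl}(A,B)$ is the least $\alpha\le\omega_1$ with $A\in\mathcal F_\alpha(B)$ (defined iff $A\in\mathcal F_{\omega_1}(B)$). *)

theory Defs
  imports "HOL-Analysis.Analysis"
begin

definition tychonoff_space :: "'a topology \<Rightarrow> bool" where
  "tychonoff_space X \<longleftrightarrow> completely_regular_space X \<and> t1_space X"

definition isolated_points :: "'a topology \<Rightarrow> 'a set" where
  "isolated_points Y = {y \<in> topspace Y. openin Y {y}}"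

definition nonisolated_points :: "'a topology \<Rightarrow> 'a set" where
  "nonisolated_points Y = topspace Y - isolated_points Y"

definition zoom_V :: "'a topology \<Rightarrow> ('a \<Rightarrow> 'a topology) \<Rightarrow> 'a set \<Rightarrow> 'a set" where
  "zoom_V Y X U = (U - isolated_points Y) \<union> (\<Union>i \<in> U \<inter> isolated_points Y. topspace (X i))"

definition zoom_space :: "'a topology \<Rightarrow> ('a \<Rightarrow> 'a topology) \<Rightarrow> 'a topology" where
  "zoom_space Y X = topology_generated_by
     ({V. \<exists>i \<in> isolated_points Y. openin (X i) V} \<union> {zoom_V Y X U | U. openin Y U})"

text \<open>The ordinals \<open>\<le> \<omega>\<^sub>1\<close> are modelled by an arbitrary well-ordered type with a top
  element whose order type is \<open>\<omega>\<^sub>1 + 1\<close>: the top element is \<open>\<omega>\<^sub>1\<close>, it has uncountably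
  many predecessors, and every smaller element has only countably many predecessors.\<close>
definition omega1_plus_one_type :: "'o::{wellorder,order_top} itself \<Rightarrow> bool" where
  "omega1_plus_one_type _ \<longleftrightarrow>
     \<not> countable {\<alpha>::'o. \<alpha> < top} \<and> (\<forall>\<alpha>::'o. \<alpha> < top \<longrightarrow> countable {\<beta>. \<beta> < \<alpha>})"

definition limit_or_zero :: "'o::wellorder \<Rightarrow> bool" where
  "limit_or_zero \<alpha> \<longleftrightarrow> (\<forall>\<beta><\<alpha>. \<exists>\<gamma>. \<beta> < \<gamma> \<and> \<gamma> < \<alpha>)"

text \<open>\<open>\<alpha> = \<lambda> + m\<close> with \<open>\<lambda>\<close> limit or zero, \<open>m \<in> \<omega>\<close>; \<open>\<alpha>\<close> is odd iff m is odd
  (m is the number of ordinals in the interval \<open>(\<lambda>, \<alpha>]\<close>).\<close>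
definition ord_odd :: "'o::wellorder \<Rightarrow> bool" where
  "ord_odd \<alpha> \<longleftrightarrow> (\<exists>l. limit_or_zero l \<and> l \<le> \<alpha> \<and> finite {\<gamma>. l < \<gamma> \<and> \<gamma> \<le> \<alpha>}
                          \<and> odd (card {\<gamma>. l < \<gamma> \<and> \<gamma> \<le> \<alpha>}))"

definition ord_sup :: "'o::{wellorder,order_top} set \<Rightarrow> 'o" where
  "ord_sup S = (LEAST \<alpha>. \<forall>\<beta>\<in>S. \<beta> \<le> \<alpha>)"

inductive Fclass :: "'a topology \<Rightarrow> 'o::{wellorder,order_top} \<Rightarrow> 'a set \<Rightarrow> bool"
  for B :: "'a topology" where
  zero: "(\<forall>\<beta>. \<alpha> \<le> \<beta>) \<Longrightarrow> closedin B A \<Longrightarrow> Fclass B \<alpha> A"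
| odd_union: "\<alpha> < top \<Longrightarrow> \<not> (\<forall>\<beta>. \<alpha> \<le> \<beta>) \<Longrightarrow> ord_odd \<alpha> \<Longrightarrow>
     (\<forall>n::nat. \<exists>\<beta><\<alpha>. Fclass B \<beta> (A n)) \<Longrightarrow> Fclass B \<alpha> (\<Union>n. A n)"
| even_inter: "\<alpha> < top \<Longrightarrow> \<not> (\<forall>\<beta>. \<alpha> \<le> \<beta>) \<Longrightarrow> \<not> ord_odd \<alpha> \<Longrightarrow>
     (\<forall>n::nat. \<exists>\<beta><\<alpha>. Fclass B \<beta> (A n)) \<Longrightarrow> Fclass B \<alpha> (\<Inter>n. A n)"
| suslin: "(\<forall>s. closedin B (F s)) \<Longrightarrow>
     Fclass B top (\<Union>\<sigma>::nat \<Rightarrow> nat. \<Inter>k. F (map \<sigma> [0..<Suc k]))"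

definition Compl_defined :: "'a set \<Rightarrow> 'a topology \<Rightarrow> 'o::{wellorder,order_top} itself \<Rightarrow> bool" where
  "Compl_defined A B _ \<longleftrightarrow> Fclass B (top::'o) A"

definition Complexity :: "'a set \<Rightarrow> 'a topology \<Rightarrow> 'o::{wellorder,order_top}" where
  "Complexity A B = (LEAST \<alpha>. Fclass B \<alpha> A)"

end

theory Submission
  imports Defs
begin

text \<open>
  Collapsing each piece \<open>X\<^sub>i\<close> of the big zoom space back to the point \<open>i\<close> is a continuous
  retraction onto \<open>Y\<close>, and a section together with the inclusions of the pieces are continuous
  maps into it. Pulling back along them shows that if the small zoom space is of class \<open>\<F>\<^sub>\<alpha>\<close>
  in the big one, then so are \<open>Y\<close> and all \<open>X\<^sub>i\<close> in their extensions. Conversely, the small zoom space is the preimage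
  of \<open>Y\<close> under the retraction intersected with the fibrewise union of the \<open>X\<^sub>i\<close>, and a
  fibrewise union of sets of class \<open>\<alpha>\<close> is again of class \<open>\<alpha>\<close>: by induction on \<open>\<alpha>\<close>,
  after choosing the countably many levels of the decompositions uniformly in \<open>i\<close>, which at
  limit ordinals uses that there are only countably many ordinals below \<open>\<alpha>\<close>.
\<close>

section \<open>Ordinals\<close>

lemma limit_or_zero_interval_infinite:
  fixes \<beta> \<alpha> :: "'o::wellorder"
  assumes "limit_or_zero \<alpha>" "\<beta> < \<alpha>"
  shows "infinite {\<gamma>. \<beta> < \<gamma> \<and> \<gamma> < \<alpha>}"
proof
  let ?S = "{\<gamma>. \<beta> < \<gamma> \<and> \<gamma> < \<alpha>}"
  assume fin: "finite ?S"
  have "?S \<noteq> {}" using assms unfolding limit_or_zero_def by blast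
  then have "Max ?S \<in> ?S" using fin by (rule Max_in[rotated])
  then obtain \<gamma> where "Max ?S < \<gamma>" "\<gamma> < \<alpha>"
    using assms(1) unfolding limit_or_zero_def by blast
  moreover from this have "\<gamma> \<le> Max ?S" using \<open>Max ?S \<in> ?S\<close> fin by auto
  ultimately show False by simp
qed

lemma limit_or_zero_not_ord_odd:
  assumes "limit_or_zero (\<alpha>::'o::wellorder)"
  shows "\<not> ord_odd \<alpha>"
proof
  assume "ord_odd \<alpha>"
  then obtain l where l: "l \<le> \<alpha>" "finite {\<gamma>. l < \<gamma> \<and> \<gamma> \<le> \<alpha>}"
    "odd (card {\<gamma>. l < \<gamma> \<and> \<gamma> \<le> \<alpha>})" unfolding ord_odd_def by blast
  show False
  proof (cases "l = \<alpha>")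
    case True
    then show False using l(3) by (simp add: not_less[symmetric])
  next
    case False
    with l(1) have "infinite {\<gamma>. l < \<gamma> \<and> \<gamma> < \<alpha>}"
      by (simp add: limit_or_zero_interval_infinite[OF assms])
    moreover have "{\<gamma>. l < \<gamma> \<and> \<gamma> < \<alpha>} \<subseteq> {\<gamma>. l < \<gamma> \<and> \<gamma> \<le> \<alpha>}" by auto
    ultimately show False using l(2) finite_subset by blast
  qed
qed

lemma not_ord_odd_immediate_successor:
  fixes \<alpha> \<beta> :: "'o::wellorder"
  assumes "\<alpha> < \<beta>" "\<forall>\<gamma>. \<not> (\<alpha> < \<gamma> \<and> \<gamma> < \<beta>)" "ord_odd \<alpha>"
  shows "\<not> ord_odd \<beta>"
proof
  assume "ord_odd \<beta>"
  then obtain l\<^sub>2 where l\<^sub>2: "limit_or_zero l\<^sub>2" "l\<^sub>2 \<le> \<beta>"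
     "finite {\<gamma>. l\<^sub>2 < \<gamma> \<and> \<gamma> \<le> \<beta>}" "odd (card {\<gamma>. l\<^sub>2 < \<gamma> \<and> \<gamma> \<le> \<beta>})"
    unfolding ord_odd_def by blast
  obtain l\<^sub>1 where l\<^sub>1: "limit_or_zero l\<^sub>1" "l\<^sub>1 \<le> \<alpha>"
     "finite {\<gamma>. l\<^sub>1 < \<gamma> \<and> \<gamma> \<le> \<alpha>}" "odd (card {\<gamma>. l\<^sub>1 < \<gamma> \<and> \<gamma> \<le> \<alpha>})"
    using assms(3) unfolding ord_odd_def by blast
  have "l\<^sub>2 \<noteq> \<beta>" using l\<^sub>2(4) by (auto simp: not_less[symmetric])
  with l\<^sub>2(2) assms(2) have "l\<^sub>2 \<le> \<alpha>" by (metis leI order_less_le)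
  have "l\<^sub>1 = l\<^sub>2"
  proof (rule ccontr)
    assume "l\<^sub>1 \<noteq> l\<^sub>2"
    then consider "l\<^sub>1 < l\<^sub>2" | "l\<^sub>2 < l\<^sub>1" by fastforce
    then show False
    proof cases
      case 1
      have "{\<gamma>. l\<^sub>1 < \<gamma> \<and> \<gamma> < l\<^sub>2} \<subseteq> {\<gamma>. l\<^sub>1 < \<gamma> \<and> \<gamma> \<le> \<alpha>}" using \<open>l\<^sub>2 \<le> \<alpha>\<close> by auto
      then show False
        using limit_or_zero_interval_infinite[OF l\<^sub>2(1) 1] l\<^sub>1(3) finite_subset by blast
    next
      case 2
      have "{\<gamma>. l\<^sub>2 < \<gamma> \<and> \<gamma> < l\<^sub>1} \<subseteq> {\<gamma>. l\<^sub>2 < \<gamma> \<and> \<gamma> \<le> \<beta>}" using l\<^sub>1(2) assms(1) by auto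
      then show False
        using limit_or_zero_interval_infinite[OF l\<^sub>1(1) 2] l\<^sub>2(3) finite_subset by blast
    qed
  qed
  have "{\<gamma>. l\<^sub>2 < \<gamma> \<and> \<gamma> \<le> \<beta>} = insert \<beta> {\<gamma>. l\<^sub>1 < \<gamma> \<and> \<gamma> \<le> \<alpha>}"
    using \<open>l\<^sub>1 = l\<^sub>2\<close> \<open>l\<^sub>2 \<le> \<alpha>\<close> assms(1,2) by (auto simp: not_less[symmetric] dest: order_less_le_trans)
  moreover have "\<beta> \<notin> {\<gamma>. l\<^sub>1 < \<gamma> \<and> \<gamma> \<le> \<alpha>}" using assms(1) by auto
  ultimately show False using l\<^sub>1(3,4) l\<^sub>2(4) by simp
qed

lemma immediate_successor_exists:
  fixes \<alpha> \<beta> :: "'o::wellorder"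
  assumes "\<alpha> < \<beta>"
  obtains \<sigma> where "\<alpha> < \<sigma>" "\<sigma> \<le> \<beta>" "\<forall>\<gamma>. \<not> (\<alpha> < \<gamma> \<and> \<gamma> < \<sigma>)"
proof
  show "\<alpha> < (LEAST \<gamma>. \<alpha> < \<gamma>)" using assms by (rule LeastI)
  show "(LEAST \<gamma>. \<alpha> < \<gamma>) \<le> \<beta>" using assms by (rule Least_le)
  show "\<forall>\<gamma>. \<not> (\<alpha> < \<gamma> \<and> \<gamma> < (LEAST \<gamma>. \<alpha> < \<gamma>))" using not_less_Least by blast
qed

lemma even_ordinal_between:
  fixes \<alpha> \<beta> :: "'o::wellorder"
  assumes "limit_or_zero \<alpha>" "\<beta> < \<alpha>"
  obtains \<delta> where "\<beta> < \<delta>" "\<delta> < \<alpha>" "\<not> ord_odd \<delta>"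
proof -
  have successor_below: "\<exists>\<sigma>. \<gamma> < \<sigma> \<and> \<sigma> < \<alpha> \<and> (\<forall>\<zeta>. \<not> (\<gamma> < \<zeta> \<and> \<zeta> < \<sigma>))" if "\<gamma> < \<alpha>" for \<gamma>
  proof -
    obtain \<gamma>' where "\<gamma> < \<gamma>'" "\<gamma>' < \<alpha>" using assms(1) \<open>\<gamma> < \<alpha>\<close> unfolding limit_or_zero_def by blast
    then show ?thesis by (metis immediate_successor_exists order_le_less_trans)
  qed
  obtain \<sigma> where \<sigma>: "\<beta> < \<sigma>" "\<sigma> < \<alpha>" using successor_below[OF assms(2)] by blast
  obtain \<tau> where \<tau>: "\<sigma> < \<tau>" "\<tau> < \<alpha>" "\<forall>\<zeta>. \<not> (\<sigma> < \<zeta> \<and> \<zeta> < \<tau>)"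
    using successor_below[OF \<sigma>(2)] by blast
  show ?thesis
  proof (cases "ord_odd \<sigma>")
    case True
    then show ?thesis using that \<sigma> \<tau> not_ord_odd_immediate_successor[OF \<tau>(1,3)] by (meson less_trans)
  qed (use that \<sigma> in blast)
qed

lemma omega1_plus_one_type_nontrivial:
  assumes "omega1_plus_one_type TYPE('o)"
  obtains \<beta> :: "'o::{wellorder,order_top}" where "\<beta> < top"
proof -
  have "{\<beta>::'o. \<beta> < top} \<noteq> {}"
    using assms unfolding omega1_plus_one_type_def by (metis countable_empty)
  then show ?thesis using that by blast
qed

lemma omega1_plus_one_type_countable_below:
  assumes "omega1_plus_one_type TYPE('o::{wellorder,order_top})" "(\<alpha>::'o) < top"
  shows "countable {\<beta>. \<beta> < \<alpha>}"
  using assms unfolding omega1_plus_one_type_def by blast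

section \<open>The classes \<open>\<F>\<^sub>\<alpha>\<close>\<close>

lemma Fclass_subset_topspace: "Fclass B \<alpha> A \<Longrightarrow> A \<subseteq> topspace B"
proof (induction rule: Fclass.induct)
  case (suslin F)
  then show ?case using closedin_subset by blast
qed (auto dest: closedin_subset)

lemma Fclass_continuous_map_preimage:
  assumes "Fclass B \<alpha> A" "continuous_map C B f"
  shows "Fclass C \<alpha> {x \<in> topspace C. f x \<in> A}"
  using assms(1)
proof (induction rule: Fclass.induct)
  case (zero \<alpha> A)
  then show ?case using closedin_continuous_map_preimage[OF assms(2)] Fclass.zero by blast
next
  case (odd_union \<alpha> A)
  have "Fclass C \<alpha> (\<Union>n. {x \<in> topspace C. f x \<in> A n})"
    by (rule Fclass.odd_union) (use odd_union in auto)
  moreover have "{x \<in> topspace C. f x \<in> (\<Union>n. A n)} = (\<Union>n. {x \<in> topspace C. f x \<in> A n})" by auto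
  ultimately show ?case by simp
next
  case (even_inter \<alpha> A)
  have "Fclass C \<alpha> (\<Inter>n. {x \<in> topspace C. f x \<in> A n})"
    by (rule Fclass.even_inter) (use even_inter in auto)
  moreover have "{x \<in> topspace C. f x \<in> (\<Inter>n. A n)} = (\<Inter>n. {x \<in> topspace C. f x \<in> A n})" by auto
  ultimately show ?case by simp
next
  case (suslin F)
  have "Fclass C top (\<Union>\<sigma>::nat \<Rightarrow> nat. \<Inter>k. {x \<in> topspace C. f x \<in> F (map \<sigma> [0..<Suc k])})"
    by (rule Fclass.suslin) (use suslin closedin_continuous_map_preimage[OF assms(2)] in auto)
  moreover have "{x \<in> topspace C. f x \<in> (\<Union>\<sigma>::nat \<Rightarrow> nat. \<Inter>k. F (map \<sigma> [0..<Suc k]))}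
     = (\<Union>\<sigma>::nat \<Rightarrow> nat. \<Inter>k. {x \<in> topspace C. f x \<in> F (map \<sigma> [0..<Suc k])})" by auto
  ultimately show ?case by simp
qed

lemma Fclass_mono:
  fixes \<alpha> \<beta> :: "'o::{wellorder,order_top}"
  assumes "Fclass B \<beta> A" "\<beta> \<le> \<alpha>" "\<alpha> < top"
  shows "Fclass B \<alpha> A"
proof (cases "\<beta> = \<alpha>")
  case False
  with assms(2) have "\<beta> < \<alpha>" by simp
  then have nonbottom: "\<not> (\<forall>\<gamma>. \<alpha> \<le> \<gamma>)" using not_le by blast
  show ?thesis
  proof (cases "ord_odd \<alpha>")
    case True
    have "Fclass B \<alpha> (\<Union>n::nat. A)"
      by (rule Fclass.odd_union) (use assms nonbottom True \<open>\<beta> < \<alpha>\<close> in auto)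
    then show ?thesis by simp
  next
    case False
    have "Fclass B \<alpha> (\<Inter>n::nat. A)"
      by (rule Fclass.even_inter) (use assms nonbottom False \<open>\<beta> < \<alpha>\<close> in auto)
    then show ?thesis by simp
  qed
qed (use assms in simp)

lemma Fclass_topspace:
  fixes \<alpha> :: "'o::{wellorder,order_top}"
  assumes "\<alpha> < top"
  shows "Fclass B \<alpha> (topspace B)"
proof -
  have "Fclass B (LEAST \<beta>::'o. True) (topspace B)"
    by (rule Fclass.zero) (simp_all add: Least_le)
  then show ?thesis by (rule Fclass_mono) (simp_all add: Least_le assms)
qed

text \<open>\<open>\<beta>\<^sub>0\<close> rules out the degenerate type in which \<open>top\<close> is also the least element.\<close>

lemma Fclass_bottom_closedin:
  fixes \<alpha> \<beta>\<^sub>0 :: "'o::{wellorder,order_top}"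
  assumes "Fclass B \<alpha> A" "\<forall>\<beta>. \<alpha> \<le> \<beta>" "\<beta>\<^sub>0 < top"
  shows "closedin B A"
  using assms(1)
proof (cases rule: Fclass.cases)
  case suslin
  with assms(2) have "top \<le> \<beta>\<^sub>0" by blast
  with assms(3) show ?thesis by simp
qed (use assms(2) in blast)+

lemma Fclass_odd_UnionE:
  fixes \<alpha> :: "'o::{wellorder,order_top}"
  assumes "Fclass B \<alpha> A" "\<alpha> < top" "\<not> (\<forall>\<beta>. \<alpha> \<le> \<beta>)" "ord_odd \<alpha>"
  obtains P where "A = (\<Union>n. P n)" "\<forall>n::nat. \<exists>\<beta><\<alpha>. Fclass B \<beta> (P n)"
  using assms(1)
proof (cases rule: Fclass.cases)
  case (odd_union P)
  then show ?thesis using that by blast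
qed (use assms in simp_all)

lemma Fclass_even_InterE:
  fixes \<alpha> :: "'o::{wellorder,order_top}"
  assumes "Fclass B \<alpha> A" "\<alpha> < top" "\<not> (\<forall>\<beta>. \<alpha> \<le> \<beta>)" "\<not> ord_odd \<alpha>"
  obtains P where "A = (\<Inter>n. P n)" "\<forall>n::nat. \<exists>\<beta><\<alpha>. Fclass B \<beta> (P n)"
  using assms(1)
proof (cases rule: Fclass.cases)
  case (even_inter P)
  then show ?thesis using that by blast
qed (use assms in simp_all)

lemma Fclass_topE:
  assumes "Fclass B (top::'o::{wellorder,order_top}) A"
  obtains F where "\<forall>s. closedin B (F s)" "A = (\<Union>\<sigma>::nat \<Rightarrow> nat. \<Inter>k. F (map \<sigma> [0..<Suc k]))"
  using assms
proof (cases rule: Fclass.cases)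
  case zero
  then show ?thesis using that[of "\<lambda>_. A"] by simp
next
  case (suslin F)
  then show ?thesis using that by blast
qed (simp_all)

lemma UN_Int_UN_eq_UN_prod_decode:
  fixes P Q :: "nat \<Rightarrow> 'a set"
  shows "(\<Union>n. P n) \<inter> (\<Union>m. Q m) = (\<Union>k. P (fst (prod_decode k)) \<inter> Q (snd (prod_decode k)))"
proof (intro set_eqI iffI)
  fix x assume "x \<in> (\<Union>n. P n) \<inter> (\<Union>m. Q m)"
  then obtain n m where "x \<in> P n" "x \<in> Q m" by auto
  then show "x \<in> (\<Union>k. P (fst (prod_decode k)) \<inter> Q (snd (prod_decode k)))"
    by (intro UN_I[of "prod_encode (n, m)"]) auto
qed auto

lemma INT_Int_INT_eq_INT_interleave:
  fixes P Q :: "nat \<Rightarrow> 'a set"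
  shows "(\<Inter>n. P n) \<inter> (\<Inter>m. Q m) = (\<Inter>k. if even k then P (k div 2) else Q (k div 2))"
proof (intro set_eqI iffI)
  fix x assume x: "x \<in> (\<Inter>k. if even k then P (k div 2) else Q (k div 2))"
  have "x \<in> P n" for n using x[THEN INT_D, of "2 * n"] by simp
  moreover have "x \<in> Q n" for n using x[THEN INT_D, of "2 * n + 1"] by simp
  ultimately show "x \<in> (\<Inter>n. P n) \<inter> (\<Inter>m. Q m)" by auto
qed auto

lemma Fclass_Int_below_top:
  fixes \<alpha> \<beta>\<^sub>0 :: "'o::{wellorder,order_top}"
  assumes "\<alpha> < top" "\<beta>\<^sub>0 < top"
  shows "Fclass B \<alpha> A \<Longrightarrow> Fclass B \<alpha> A' \<Longrightarrow> Fclass B \<alpha> (A \<inter> A')"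
  using assms(1)
proof (induction \<alpha> arbitrary: A A' rule: less_induct)
  case (less \<alpha>)
  have IH: "\<exists>\<beta><\<alpha>. Fclass B \<beta> (P \<inter> Q)"
    if "\<beta>\<^sub>1 < \<alpha>" "Fclass B \<beta>\<^sub>1 P" "\<beta>\<^sub>2 < \<alpha>" "Fclass B \<beta>\<^sub>2 Q" for \<beta>\<^sub>1 \<beta>\<^sub>2 P Q
  proof -
    have "max \<beta>\<^sub>1 \<beta>\<^sub>2 < \<alpha>" "max \<beta>\<^sub>1 \<beta>\<^sub>2 < top" using that less.prems(3) by auto
    then show ?thesis
      using less.IH Fclass_mono[OF that(2)] Fclass_mono[OF that(4)] by (meson max.cobounded1 max.cobounded2)
  qed
  show ?case
  proof (cases "\<forall>\<beta>. \<alpha> \<le> \<beta>")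
    case True
    then show ?thesis
      using Fclass_bottom_closedin[OF _ True assms(2)] less.prems by (intro Fclass.zero) auto
  next
    case nonbottom: False
    show ?thesis
    proof (cases "ord_odd \<alpha>")
      case True
      obtain P Q where P: "A = (\<Union>n. P n)" "\<forall>n::nat. \<exists>\<beta><\<alpha>. Fclass B \<beta> (P n)"
        and Q: "A' = (\<Union>n. Q n)" "\<forall>n::nat. \<exists>\<beta><\<alpha>. Fclass B \<beta> (Q n)"
        by (metis Fclass_odd_UnionE less.prems nonbottom True)
      have "Fclass B \<alpha> (\<Union>k. P (fst (prod_decode k)) \<inter> Q (snd (prod_decode k)))"
        by (rule Fclass.odd_union[OF less.prems(3) nonbottom True]) (use P Q IH in metis)
      then show ?thesis unfolding P(1) Q(1) UN_Int_UN_eq_UN_prod_decode .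
    next
      case False
      obtain P Q where P: "A = (\<Inter>n. P n)" "\<forall>n::nat. \<exists>\<beta><\<alpha>. Fclass B \<beta> (P n)"
        and Q: "A' = (\<Inter>n. Q n)" "\<forall>n::nat. \<exists>\<beta><\<alpha>. Fclass B \<beta> (Q n)"
        by (metis Fclass_even_InterE less.prems nonbottom False)
      have "Fclass B \<alpha> (\<Inter>k. if even k then P (k div 2) else Q (k div 2))"
        by (rule Fclass.even_inter[OF less.prems(3) nonbottom False]) (use P Q in auto)
      then show ?thesis unfolding P(1) Q(1) INT_Int_INT_eq_INT_interleave .
    qed
  qed
qed

definition even_entries :: "nat list \<Rightarrow> nat list" where
  "even_entries s = map (\<lambda>j. s ! (2 * j)) [0..<(length s + 1) div 2]"

definition odd_entries :: "nat list \<Rightarrow> nat list" where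
  "odd_entries s = map (\<lambda>j. s ! (2 * j + 1)) [0..<length s div 2]"

lemma even_entries_prefix:
  "even_entries (map \<rho> [0..<Suc k]) = map (\<lambda>j. \<rho> (2 * j)) [0..<Suc (k div 2)]"
proof -
  have "(Suc k + 1) div 2 = Suc (k div 2)" by simp
  then show ?thesis unfolding even_entries_def by (auto intro!: map_cong simp del: upt_Suc)
qed

lemma odd_entries_prefix:
  "odd_entries (map \<rho> [0..<Suc (Suc k)]) = map (\<lambda>j. \<rho> (2 * j + 1)) [0..<Suc (k div 2)]"
proof -
  have "Suc (Suc k) div 2 = Suc (k div 2)" by simp
  then show ?thesis unfolding odd_entries_def by (auto intro!: map_cong simp del: upt_Suc)
qed

lemma Fclass_top_Int:
  assumes "Fclass B (top::'o::{wellorder,order_top}) A" "Fclass B (top::'o) A'"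
  shows "Fclass B (top::'o) (A \<inter> A')"
proof -
  obtain F where F: "\<forall>s. closedin B (F s)" "A = (\<Union>\<sigma>::nat \<Rightarrow> nat. \<Inter>k. F (map \<sigma> [0..<Suc k]))"
    using Fclass_topE[OF assms(1)] by blast
  obtain G where G: "\<forall>s. closedin B (G s)" "A' = (\<Union>\<sigma>::nat \<Rightarrow> nat. \<Inter>k. G (map \<sigma> [0..<Suc k]))"
    using Fclass_topE[OF assms(2)] by blast
  \<comment> \<open>Interleave the schemes: even coordinates of a branch follow \<open>F\<close>, odd ones follow \<open>G\<close>.\<close>
  define H where
    "H s = F (even_entries s) \<inter> (if length s < 2 then topspace B else G (odd_entries s))" for s
  have closed_H: "\<forall>s. closedin B (H s)" unfolding H_def using F(1) G(1) by auto
  have interleaved: "(\<Inter>k. H (map \<rho> [0..<Suc k])) =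
      (\<Inter>k. F (map (\<lambda>j. \<rho> (2 * j)) [0..<Suc k])) \<inter> (\<Inter>k. G (map (\<lambda>j. \<rho> (2 * j + 1)) [0..<Suc k]))"
    for \<rho>
  proof (intro set_eqI iffI)
    fix x assume x: "x \<in> (\<Inter>k. H (map \<rho> [0..<Suc k]))"
    have "x \<in> F (map (\<lambda>j. \<rho> (2 * j)) [0..<Suc m])" for m
      using x[THEN INT_D, of "2 * m"] unfolding H_def even_entries_prefix by simp
    moreover have "x \<in> G (map (\<lambda>j. \<rho> (2 * j + 1)) [0..<Suc m])" for m
    proof -
      have "x \<in> H (map \<rho> [0..<Suc (Suc (2 * m))])" using x by blast
      then show ?thesis unfolding H_def odd_entries_prefix by (simp del: upt_Suc)
    qed
    ultimately show "x \<in> (\<Inter>k. F (map (\<lambda>j. \<rho> (2 * j)) [0..<Suc k])) \<inter>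
        (\<Inter>k. G (map (\<lambda>j. \<rho> (2 * j + 1)) [0..<Suc k]))" by blast
  next
    fix x assume x: "x \<in> (\<Inter>k. F (map (\<lambda>j. \<rho> (2 * j)) [0..<Suc k])) \<inter>
        (\<Inter>k. G (map (\<lambda>j. \<rho> (2 * j + 1)) [0..<Suc k]))"
    have "x \<in> topspace B" using x F(1) closedin_subset by blast
    show "x \<in> (\<Inter>k. H (map \<rho> [0..<Suc k]))"
    proof
      fix k :: nat
      show "x \<in> H (map \<rho> [0..<Suc k])"
      proof (cases k)
        case 0
        then show ?thesis
          using x \<open>x \<in> topspace B\<close> unfolding H_def even_entries_prefix by (simp del: upt_Suc)
      next
        case (Suc k')
        have "x \<in> F (even_entries (map \<rho> [0..<Suc k]))" using x unfolding even_entries_prefix by simp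
        moreover have "x \<in> G (odd_entries (map \<rho> [0..<Suc (Suc k')]))"
          using x unfolding odd_entries_prefix by blast
        ultimately show ?thesis unfolding H_def using Suc by (simp del: upt_Suc)
      qed
    qed
  qed
  have "A \<inter> A' = (\<Union>\<rho>::nat \<Rightarrow> nat. \<Inter>k. H (map \<rho> [0..<Suc k]))"
  proof (intro set_eqI iffI)
    fix x assume "x \<in> A \<inter> A'"
    then obtain \<sigma> \<tau> where "x \<in> (\<Inter>k. F (map \<sigma> [0..<Suc k]))" "x \<in> (\<Inter>k. G (map \<tau> [0..<Suc k]))"
      using F(2) G(2) by blast
    moreover define \<rho> where "\<rho> j = (if even j then \<sigma> (j div 2) else \<tau> (j div 2))" for j
    moreover have "(\<lambda>j. \<rho> (2 * j)) = \<sigma>" "(\<lambda>j. \<rho> (2 * j + 1)) = \<tau>" unfolding \<rho>_def by auto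
    ultimately have "x \<in> (\<Inter>k. H (map \<rho> [0..<Suc k]))"
      unfolding interleaved[of \<rho>] by simp
    then show "x \<in> (\<Union>\<rho>::nat \<Rightarrow> nat. \<Inter>k. H (map \<rho> [0..<Suc k]))" by blast
  next
    fix x assume "x \<in> (\<Union>\<rho>::nat \<Rightarrow> nat. \<Inter>k. H (map \<rho> [0..<Suc k]))"
    then obtain \<rho> where "x \<in> (\<Inter>k. H (map \<rho> [0..<Suc k]))" by blast
    then show "x \<in> A \<inter> A'" unfolding interleaved F(2) G(2) by blast
  qed
  then show ?thesis using Fclass.suslin[OF closed_H] by simp
qed

lemma Fclass_Int:
  fixes \<alpha> \<beta>\<^sub>0 :: "'o::{wellorder,order_top}"
  assumes "Fclass B \<alpha> A" "Fclass B \<alpha> A'" "\<beta>\<^sub>0 < top"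
  shows "Fclass B \<alpha> (A \<inter> A')"
proof (cases "\<alpha> = top")
  case True
  then show ?thesis using Fclass_top_Int assms(1,2) by blast
next
  case False
  then show ?thesis using Fclass_Int_below_top assms top.not_eq_extremum by blast
qed

lemma Complexity_Fclass:
  assumes "Fclass B (top::'o::{wellorder,order_top}) A"
  shows "Fclass B (Complexity A B :: 'o) A"
  unfolding Complexity_def using assms by (rule LeastI)

lemma Complexity_le: "Fclass B (\<alpha>::'o::{wellorder,order_top}) A \<Longrightarrow> Complexity A B \<le> \<alpha>"
  unfolding Complexity_def by (rule Least_le)

lemma ord_sup_upper: "\<beta> \<in> S \<Longrightarrow> \<beta> \<le> ord_sup (S::'o::{wellorder,order_top} set)"
proof -
  have "\<forall>\<beta>\<in>S. \<beta> \<le> ord_sup S" unfolding ord_sup_def by (rule LeastI[of _ top]) simp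
  then show "\<beta> \<in> S \<Longrightarrow> \<beta> \<le> ord_sup S" by blast
qed

lemma ord_sup_least: "(\<And>\<beta>. \<beta> \<in> S \<Longrightarrow> \<beta> \<le> \<gamma>) \<Longrightarrow> ord_sup (S::'o::{wellorder,order_top} set) \<le> \<gamma>"
  unfolding ord_sup_def by (rule Least_le) blast

lemma Complexity_eq_max_ord_sup:
  fixes Bz :: "'a topology" and B :: "'b topology" and Bi :: "'i \<Rightarrow> 'c topology"
  assumes Fclass_iff: "\<And>\<alpha>::'o::{wellorder,order_top}.
      Fclass Bz \<alpha> Az \<longleftrightarrow> Fclass B \<alpha> A \<and> (\<forall>i\<in>I. Fclass (Bi i) \<alpha> (Ai i))"
    and defined: "Fclass Bz (top::'o) Az"
  shows "(Complexity Az Bz :: 'o) = max (Complexity A B) (ord_sup ((\<lambda>i. Complexity (Ai i) (Bi i)) ` I))"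
    (is "?c = max ?a ?s")
proof (rule antisym)
  have "Fclass B ?c A" "\<forall>i\<in>I. Fclass (Bi i) ?c (Ai i)"
    using Complexity_Fclass[OF defined] Fclass_iff by blast+
  then show "max ?a ?s \<le> ?c"
    by (auto intro: Complexity_le ord_sup_least)
  show "?c \<le> max ?a ?s"
  proof (cases "max ?a ?s = top")
    case False
    then have below_top: "max ?a ?s < top" using top.not_eq_extremum by blast
    have "Fclass B (top::'o) A" and top_pieces: "\<forall>i\<in>I. Fclass (Bi i) (top::'o) (Ai i)"
      using defined Fclass_iff by blast+
    then have "Fclass B (max ?a ?s) A"
      using Fclass_mono[OF Complexity_Fclass max.cobounded1 below_top] by blast
    moreover have "Fclass (Bi i) (max ?a ?s) (Ai i)" if "i \<in> I" for i
    proof (rule Fclass_mono[OF Complexity_Fclass _ below_top])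
      show "Fclass (Bi i) (top::'o) (Ai i)" using top_pieces that by blast
      have "Complexity (Ai i) (Bi i) \<le> ?s" using that by (intro ord_sup_upper) blast
      then show "Complexity (Ai i) (Bi i) \<le> max ?a ?s" by (simp add: le_max_iff_disj)
    qed
    ultimately show ?thesis using Fclass_iff Complexity_le by blast
  qed simp
qed

lemma Fclass_below_successor:
  fixes \<alpha> \<beta> \<gamma> :: "'o::{wellorder,order_top}"
  assumes "Fclass B \<beta> A" "\<beta> < \<alpha>" "\<gamma> < \<alpha>" "\<forall>\<zeta>. \<not> (\<gamma> < \<zeta> \<and> \<zeta> < \<alpha>)" "\<alpha> < top"
  shows "Fclass B \<gamma> A"
proof (rule Fclass_mono[OF assms(1)])
  show "\<beta> \<le> \<gamma>" using assms(2,4) by (meson not_le)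
  show "\<gamma> < top" using assms(3,5) by (rule less_trans)
qed

lemma Fclass_family_Union_uniform_levels:
  fixes \<alpha> :: "'o::{wellorder,order_top}"
  assumes "\<forall>i\<in>I. Fclass (X i) \<alpha> (A i)" "\<alpha> < top" "\<not> (\<forall>\<beta>. \<alpha> \<le> \<beta>)" "ord_odd \<alpha>"
  obtains B where "\<forall>k::nat. \<exists>\<beta><\<alpha>. \<forall>i\<in>I. Fclass (X i) \<beta> (B i k)" "\<forall>i\<in>I. A i = (\<Union>k. B i k)"
proof -
  obtain \<gamma> where \<gamma>: "\<gamma> < \<alpha>" "\<forall>\<zeta>. \<not> (\<gamma> < \<zeta> \<and> \<zeta> < \<alpha>)"
    using limit_or_zero_not_ord_odd assms(4) unfolding limit_or_zero_def by blast
  have "\<forall>i\<in>I. \<exists>P. A i = (\<Union>k. P k) \<and> (\<forall>k::nat. Fclass (X i) \<gamma> (P k))"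
  proof
    fix i assume "i \<in> I"
    then obtain P where P: "A i = (\<Union>k. P k)" "\<forall>k::nat. \<exists>\<beta><\<alpha>. Fclass (X i) \<beta> (P k)"
      using Fclass_odd_UnionE[OF _ assms(2-4)] \<open>i \<in> I\<close> assms(1) by blast
    have "Fclass (X i) \<gamma> (P k)" for k
      using P(2) Fclass_below_successor[OF _ _ \<gamma> assms(2)] by blast
    then show "\<exists>P. A i = (\<Union>k. P k) \<and> (\<forall>k::nat. Fclass (X i) \<gamma> (P k))"
      using P(1) by blast
  qed
  from bchoice[OF this] obtain B
    where B: "\<forall>i\<in>I. A i = (\<Union>k. B i k) \<and> (\<forall>k::nat. Fclass (X i) \<gamma> (B i k))" by blast
  show ?thesis
  proof (rule that)
    show "\<forall>k::nat. \<exists>\<beta><\<alpha>. \<forall>i\<in>I. Fclass (X i) \<beta> (B i k)" using B \<gamma>(1) by blast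
    show "\<forall>i\<in>I. A i = (\<Union>k. B i k)" using B by blast
  qed
qed

lemma Fclass_INT_truncated:
  fixes \<delta> \<kappa> :: "'o::{wellorder,order_top}"
  assumes "\<delta> < top" "\<kappa> < \<delta>" "\<not> ord_odd \<delta>" "\<And>n. Fclass B (lev n) (P n)"
  shows "Fclass B \<delta> (\<Inter>n::nat. if lev n \<le> \<kappa> then P n else topspace B)"
proof (rule Fclass.even_inter[OF assms(1) _ assms(3)], unfold not_all not_le)
  show "\<exists>\<beta>. \<beta> < \<delta>" using assms(2) by blast
  show "\<forall>n. \<exists>\<beta><\<delta>. Fclass B \<beta> (if lev n \<le> \<kappa> then P n else topspace B)"
  proof
    fix n
    show "\<exists>\<beta><\<delta>. Fclass B \<beta> (if lev n \<le> \<kappa> then P n else topspace B)"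
    proof (cases "lev n \<le> \<kappa>")
      case True
      then have "lev n < \<delta>" using assms(2) by (rule le_less_trans)
      then show ?thesis using True assms(4) by auto
    next
      case False
      have "\<kappa> < top" using assms(2,1) by (rule less_trans)
      then show ?thesis using False assms(2) Fclass_topspace by auto
    qed
  qed
qed

lemma INT_truncated_eq:
  assumes "(\<Inter>n. P n) \<subseteq> T" "\<And>n. \<exists>k. lev n \<le> \<kappa> k"
  shows "(\<Inter>k. \<Inter>n::nat. if lev n \<le> \<kappa> k then P n else T) = (\<Inter>n. P n)"
proof
  show "(\<Inter>n. P n) \<subseteq> (\<Inter>k. \<Inter>n. if lev n \<le> \<kappa> k then P n else T)"
    using assms(1) by (auto split: if_split)
  show "(\<Inter>k. \<Inter>n. if lev n \<le> \<kappa> k then P n else T) \<subseteq> (\<Inter>n. P n)"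
  proof (rule INT_greatest)
    fix n
    obtain k where "lev n \<le> \<kappa> k" using assms(2) by blast
    then have "(\<Inter>n'. if lev n' \<le> \<kappa> k then P n' else T) \<subseteq> P n"
      using INT_lower[of n UNIV "\<lambda>n'. if lev n' \<le> \<kappa> k then P n' else T"] by simp
    then show "(\<Inter>k. \<Inter>n. if lev n \<le> \<kappa> k then P n else T) \<subseteq> P n" by blast
  qed
qed

lemma Fclass_family_Inter_uniform_levels_limit:
  fixes \<alpha> :: "'o::{wellorder,order_top}"
  assumes "limit_or_zero \<alpha>" "\<alpha> < top" "countable {\<beta>. \<beta> < \<alpha>}" "\<beta>\<^sub>0 < \<alpha>"
    and lev: "\<forall>i\<in>I. \<forall>n::nat. lev i n < \<alpha> \<and> Fclass (X i) (lev i n) (P i n)"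
  obtains C where "\<forall>k::nat. \<exists>\<beta><\<alpha>. \<forall>i\<in>I. Fclass (X i) \<beta> (C i k)"
    "\<forall>i\<in>I. (\<Inter>n. P i n) = (\<Inter>k. C i k)"
proof -
  define e where "e = from_nat_into {\<beta>. \<beta> < \<alpha>}"
  have e_below: "e k < \<alpha>" for k
    unfolding e_def using from_nat_into assms(4) by (metis empty_iff mem_Collect_eq)
  have e_onto: "\<exists>k. e k = \<beta>" if "\<beta> < \<alpha>" for \<beta>
    unfolding e_def using from_nat_into_surj[OF assms(3)] that by blast
  have "\<forall>k. \<exists>\<delta>. e k < \<delta> \<and> \<delta> < \<alpha> \<and> \<not> ord_odd \<delta>"
  proof
    fix k
    obtain \<delta> where "e k < \<delta>" "\<delta> < \<alpha>" "\<not> ord_odd \<delta>"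
      by (rule even_ordinal_between[OF assms(1) e_below])
    then show "\<exists>\<delta>. e k < \<delta> \<and> \<delta> < \<alpha> \<and> \<not> ord_odd \<delta>" by blast
  qed
  then obtain \<delta> where \<delta>: "\<And>k. e k < \<delta> k" "\<And>k. \<delta> k < \<alpha>" "\<And>k. \<not> ord_odd (\<delta> k)"
    unfolding choice_iff by blast
  \<comment> \<open>Keeping only the pieces of level \<open>\<le> e k\<close> gives level \<open>\<delta> k\<close> independently of \<open>i\<close>;
    as \<open>e\<close> enumerates all levels below \<open>\<alpha>\<close>, nothing is lost in the intersection over \<open>k\<close>.\<close>
  define C where "C i k = (\<Inter>n. if lev i n \<le> e k then P i n else topspace (X i))" for i k
  show ?thesis
  proof (rule that)
    have "Fclass (X i) (\<delta> k) (C i k)" if "i \<in> I" for i k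
      unfolding C_def using less_trans[OF \<delta>(2) assms(2)] \<delta>(1,3) lev that
      by (intro Fclass_INT_truncated) blast+
    then show "\<forall>k. \<exists>\<beta><\<alpha>. \<forall>i\<in>I. Fclass (X i) \<beta> (C i k)" using \<delta>(2) by blast
    show "\<forall>i\<in>I. (\<Inter>n. P i n) = (\<Inter>k. C i k)"
    proof
      fix i assume "i \<in> I"
      have "(\<Inter>n. P i n) \<subseteq> topspace (X i)"
        using lev \<open>i \<in> I\<close> Fclass_subset_topspace[of "X i" "lev i 0" "P i 0"] by blast
      moreover have "\<exists>k. lev i n \<le> e k" for n
        using lev \<open>i \<in> I\<close> e_onto[of "lev i n"] by (metis order.refl)
      ultimately show "(\<Inter>n. P i n) = (\<Inter>k. C i k)" unfolding C_def by (rule INT_truncated_eq[symmetric])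
    qed
  qed
qed

lemma Fclass_family_Inter_uniform_levels:
  fixes \<alpha> :: "'o::{wellorder,order_top}"
  assumes "\<forall>i\<in>I. Fclass (X i) \<alpha> (A i)" "\<alpha> < top" "\<not> (\<forall>\<beta>. \<alpha> \<le> \<beta>)" "\<not> ord_odd \<alpha>"
    and "countable {\<beta>. \<beta> < \<alpha>}"
  obtains B where "\<forall>k::nat. \<exists>\<beta><\<alpha>. \<forall>i\<in>I. Fclass (X i) \<beta> (B i k)" "\<forall>i\<in>I. A i = (\<Inter>k. B i k)"
proof -
  have "\<forall>i\<in>I. \<exists>P. A i = (\<Inter>n. P n) \<and> (\<forall>n::nat. \<exists>\<beta><\<alpha>. Fclass (X i) \<beta> (P n))"
  proof
    fix i assume "i \<in> I"
    with assms(1) have "Fclass (X i) \<alpha> (A i)" by blast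
    then obtain P where "A i = (\<Inter>n. P n)" "\<forall>n::nat. \<exists>\<beta><\<alpha>. Fclass (X i) \<beta> (P n)"
      using assms(2-4) by (rule Fclass_even_InterE)
    then show "\<exists>P. A i = (\<Inter>n. P n) \<and> (\<forall>n::nat. \<exists>\<beta><\<alpha>. Fclass (X i) \<beta> (P n))"
      by blast
  qed
  from bchoice[OF this] obtain P
    where P: "\<forall>i\<in>I. A i = (\<Inter>n. P i n) \<and> (\<forall>n::nat. \<exists>\<beta><\<alpha>. Fclass (X i) \<beta> (P i n))" by blast
  show ?thesis
  proof (cases "limit_or_zero \<alpha>")
    case False
    then obtain \<gamma> where \<gamma>: "\<gamma> < \<alpha>" "\<forall>\<zeta>. \<not> (\<gamma> < \<zeta> \<and> \<zeta> < \<alpha>)"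
      unfolding limit_or_zero_def by blast
    have "\<forall>i\<in>I. Fclass (X i) \<gamma> (P i n)" for n
      using P Fclass_below_successor[OF _ _ \<gamma> assms(2)] by blast
    then show ?thesis using that[of P] P \<gamma>(1) by blast
  next
    case True
    have "\<forall>i\<in>I. \<exists>lev. \<forall>n::nat. lev n < \<alpha> \<and> Fclass (X i) (lev n) (P i n)"
    proof
      fix i assume "i \<in> I"
      then have "\<forall>n::nat. \<exists>\<beta>. \<beta> < \<alpha> \<and> Fclass (X i) \<beta> (P i n)" using P by blast
      then show "\<exists>lev. \<forall>n::nat. lev n < \<alpha> \<and> Fclass (X i) (lev n) (P i n)" by (rule choice)
    qed
    from bchoice[OF this] obtain lev
      where lev: "\<forall>i\<in>I. \<forall>n::nat. lev i n < \<alpha> \<and> Fclass (X i) (lev i n) (P i n)" by blast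
    obtain \<beta>\<^sub>0 where "\<beta>\<^sub>0 < \<alpha>" using assms(3) not_le by blast
    obtain C where "\<forall>k::nat. \<exists>\<beta><\<alpha>. \<forall>i\<in>I. Fclass (X i) \<beta> (C i k)"
      "\<forall>i\<in>I. (\<Inter>n. P i n) = (\<Inter>k. C i k)"
      by (rule Fclass_family_Inter_uniform_levels_limit[OF True assms(2,5) \<open>\<beta>\<^sub>0 < \<alpha>\<close> lev])
    then show ?thesis using that[of C] P by auto
  qed
qed

section \<open>Zoom spaces\<close>

lemma subtopology_topology_generated_by:
  "subtopology (topology_generated_by \<B>) S = topology_generated_by ((\<lambda>b. b \<inter> S) ` \<B>)"
proof (rule topology_eq[THEN iffD2], intro allI iffI)
  fix W assume "openin (subtopology (topology_generated_by \<B>) S) W"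
  then obtain W\<^sub>0 where W\<^sub>0: "generate_topology_on \<B> W\<^sub>0" "W = W\<^sub>0 \<inter> S"
    unfolding openin_subtopology openin_topology_generated_by_iff by blast
  have "generate_topology_on ((\<lambda>b. b \<inter> S) ` \<B>) (W\<^sub>0 \<inter> S)" using W\<^sub>0(1)
  proof (induction rule: generate_topology_on.induct)
    case (Int a b)
    have "a \<inter> b \<inter> S = (a \<inter> S) \<inter> (b \<inter> S)" by blast
    then show ?case using Int generate_topology_on.Int by metis
  next
    case (UN K)
    have "\<Union>K \<inter> S = \<Union>((\<lambda>k. k \<inter> S) ` K)" by blast
    moreover have "generate_topology_on ((\<lambda>b. b \<inter> S) ` \<B>) (\<Union>((\<lambda>k. k \<inter> S) ` K))"
      by (rule generate_topology_on.UN) (use UN in blast)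
    ultimately show ?case by simp
  qed (auto intro: generate_topology_on.intros)
  then show "openin (topology_generated_by ((\<lambda>b. b \<inter> S) ` \<B>)) W"
    using W\<^sub>0(2) openin_topology_generated_by_iff by blast
next
  fix W assume "openin (topology_generated_by ((\<lambda>b. b \<inter> S) ` \<B>)) W"
  then have "generate_topology_on ((\<lambda>b. b \<inter> S) ` \<B>) W" by (simp add: openin_topology_generated_by_iff)
  then have "\<exists>W\<^sub>0. generate_topology_on \<B> W\<^sub>0 \<and> W = W\<^sub>0 \<inter> S"
  proof (induction rule: generate_topology_on.induct)
    case Empty
    then show ?case by (auto intro: generate_topology_on.Empty)
  next
    case (Int a b)
    then obtain Oa Ob where "generate_topology_on \<B> Oa" "a = Oa \<inter> S" "generate_topology_on \<B> Ob" "b = Ob \<inter> S"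
      by blast
    then show ?case by (intro exI[of _ "Oa \<inter> Ob"]) (auto intro: generate_topology_on.Int)
  next
    case (UN K)
    then obtain f where f: "\<And>k. k \<in> K \<Longrightarrow> generate_topology_on \<B> (f k) \<and> k = f k \<inter> S" by metis
    show ?case
      by (intro exI[of _ "\<Union>(f ` K)"]) (use f in \<open>auto intro!: generate_topology_on.UN\<close>)
  next
    case (Basis s)
    then show ?case by (auto intro: generate_topology_on.Basis)
  qed
  then show "openin (subtopology (topology_generated_by \<B>) S) W"
    unfolding openin_subtopology openin_topology_generated_by_iff by blast
qed

definition zoom_basis :: "'a topology \<Rightarrow> ('a \<Rightarrow> 'a topology) \<Rightarrow> 'a set set" where
  "zoom_basis Y X =
     {V. \<exists>i \<in> isolated_points Y. openin (X i) V} \<union> {zoom_V Y X U | U. openin Y U}"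

lemma zoom_space_eq_generated: "zoom_space Y X = topology_generated_by (zoom_basis Y X)"
  unfolding zoom_space_def zoom_basis_def ..

lemma isolated_points_subset_topspace: "isolated_points Y \<subseteq> topspace Y"
  unfolding isolated_points_def by auto

lemma zoom_V_mono: "U \<subseteq> U' \<Longrightarrow> zoom_V Y X U \<subseteq> zoom_V Y X U'"
  unfolding zoom_V_def by blast

lemma zoom_V_topspace:
  "zoom_V Y X (topspace Y) = nonisolated_points Y \<union> (\<Union>i\<in>isolated_points Y. topspace (X i))"
  unfolding zoom_V_def nonisolated_points_def Int_absorb1[OF isolated_points_subset_topspace] ..

lemma topspace_zoom_space:
  "topspace (zoom_space Y X) = nonisolated_points Y \<union> (\<Union>i\<in>isolated_points Y. topspace (X i))"
proof -
  have "V \<subseteq> zoom_V Y X (topspace Y)" if V: "V \<in> zoom_basis Y X" for V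
  proof -
    consider i where "i \<in> isolated_points Y" "openin (X i) V" | U where "openin Y U" "V = zoom_V Y X U"
      using V unfolding zoom_basis_def by blast
    then show ?thesis
    proof cases
      case 1
      then show ?thesis using openin_subset[OF 1(2)] unfolding zoom_V_topspace by blast
    next
      case 2
      then show ?thesis using zoom_V_mono[OF openin_subset] by blast
    qed
  qed
  moreover have "zoom_V Y X (topspace Y) \<in> zoom_basis Y X" unfolding zoom_basis_def by blast
  ultimately have "\<Union>(zoom_basis Y X) = zoom_V Y X (topspace Y)" by blast
  then show ?thesis unfolding zoom_space_eq_generated zoom_V_topspace by simp
qed

lemma openin_zoom_space_piece:
  assumes "i \<in> isolated_points Y" "openin (X i) V"
  shows "openin (zoom_space Y X) V"
  unfolding zoom_space_eq_generated
  by (rule topology_generated_by_Basis) (use assms in \<open>unfold zoom_basis_def, blast\<close>)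

lemma openin_zoom_space_zoom_V:
  assumes "openin Y U"
  shows "openin (zoom_space Y X) (zoom_V Y X U)"
  unfolding zoom_space_eq_generated
  by (rule topology_generated_by_Basis) (use assms in \<open>unfold zoom_basis_def, blast\<close>)

locale disjoint_zoom =
  fixes Y :: "'a topology" and X :: "'a \<Rightarrow> 'a topology"
  assumes pieces_disjoint: "\<And>i j. i \<in> isolated_points Y \<Longrightarrow> j \<in> isolated_points Y \<Longrightarrow> i \<noteq> j \<Longrightarrow>
      topspace (X i) \<inter> topspace (X j) = {}"
    and pieces_disjoint_nonisolated: "\<And>i. i \<in> isolated_points Y \<Longrightarrow>
      topspace (X i) \<inter> nonisolated_points Y = {}"
begin

lemma piece_unique:
  "i \<in> isolated_points Y \<Longrightarrow> j \<in> isolated_points Y \<Longrightarrow> x \<in> topspace (X i) \<Longrightarrow> x \<in> topspace (X j) \<Longrightarrow> i = j"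
  using pieces_disjoint by blast

lemma piece_not_nonisolated:
  "i \<in> isolated_points Y \<Longrightarrow> x \<in> topspace (X i) \<Longrightarrow> x \<notin> nonisolated_points Y"
  using pieces_disjoint_nonisolated by blast

definition collapse :: "'a \<Rightarrow> 'a" where
  "collapse z = (if \<exists>i\<in>isolated_points Y. z \<in> topspace (X i)
                 then THE i. i \<in> isolated_points Y \<and> z \<in> topspace (X i) else z)"

lemma collapse_piece: "i \<in> isolated_points Y \<Longrightarrow> z \<in> topspace (X i) \<Longrightarrow> collapse z = i"
  unfolding collapse_def by (auto intro!: the_equality dest: piece_unique)

lemma collapse_nonisolated: "z \<in> nonisolated_points Y \<Longrightarrow> collapse z = z"
  unfolding collapse_def using piece_not_nonisolated by auto

lemma mem_zoom_V_iff_collapse: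
  assumes "z \<in> topspace (zoom_space Y X)" "U \<subseteq> topspace Y"
  shows "z \<in> zoom_V Y X U \<longleftrightarrow> collapse z \<in> U"
proof (cases "z \<in> nonisolated_points Y")
  case True
  then have "z \<notin> topspace (X i)" if "i \<in> isolated_points Y" for i
    using piece_not_nonisolated that by blast
  with True show ?thesis
    unfolding zoom_V_def collapse_nonisolated[OF True] nonisolated_points_def by blast
next
  case False
  then obtain i where i: "i \<in> isolated_points Y" "z \<in> topspace (X i)"
    using assms(1) unfolding topspace_zoom_space by blast
  have "z \<notin> U - isolated_points Y"
    using False assms(2) unfolding nonisolated_points_def by blast
  then show ?thesis
    unfolding zoom_V_def collapse_piece[OF i] using i piece_unique by blast
qed

lemma collapse_in_topspace:
  assumes "z \<in> topspace (zoom_space Y X)"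
  shows "collapse z \<in> topspace Y"
proof -
  have "z \<in> zoom_V Y X (topspace Y)" using assms unfolding topspace_zoom_space zoom_V_topspace .
  then show ?thesis using mem_zoom_V_iff_collapse[OF assms order.refl] by blast
qed

lemma continuous_map_collapse: "continuous_map (zoom_space Y X) Y collapse"
  unfolding continuous_map_def
proof (intro conjI allI impI)
  show "collapse \<in> topspace (zoom_space Y X) \<rightarrow> topspace Y"
    using collapse_in_topspace by blast
  fix U assume "openin Y U"
  then have U: "U \<subseteq> topspace Y" by (rule openin_subset)
  then have "zoom_V Y X U \<subseteq> topspace (zoom_space Y X)"
    unfolding topspace_zoom_space zoom_V_topspace[symmetric] by (rule zoom_V_mono)
  then have "z \<in> zoom_V Y X U \<longleftrightarrow> z \<in> topspace (zoom_space Y X) \<and> collapse z \<in> U" for z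
    using mem_zoom_V_iff_collapse[OF _ U, of z] by blast
  then have "{z \<in> topspace (zoom_space Y X). collapse z \<in> U} = zoom_V Y X U"
    by (simp add: set_eq_iff)
  then show "openin (zoom_space Y X) {z \<in> topspace (zoom_space Y X). collapse z \<in> U}"
    using openin_zoom_space_zoom_V[OF \<open>openin Y U\<close>] by (simp only:)
qed

lemma continuous_map_piece_inclusion:
  assumes i: "i \<in> isolated_points Y"
  shows "continuous_map (X i) (zoom_space Y X) id"
  unfolding zoom_space_eq_generated
proof (rule continuous_on_generated_topo)
  show "id ` topspace (X i) \<subseteq> \<Union>(zoom_basis Y X)"
    using i unfolding topology_generated_by_topspace[symmetric] zoom_space_eq_generated[symmetric]
      topspace_zoom_space by auto
  fix V assume "V \<in> zoom_basis Y X"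
  then consider j where "j \<in> isolated_points Y" "openin (X j) V" | U where "openin Y U" "V = zoom_V Y X U"
    unfolding zoom_basis_def by blast
  then show "openin (X i) (id -` V \<inter> topspace (X i))"
  proof cases
    case (1 j)
    show ?thesis
    proof (cases "j = i")
      case True
      then show ?thesis using 1 openin_subset[OF 1(2)] by (simp add: Int_absorb2)
    next
      case False
      then have "V \<inter> topspace (X i) = {}" using pieces_disjoint[OF 1(1) i] openin_subset[OF 1(2)] by blast
      then show ?thesis by simp
    qed
  next
    case (2 U)
    have "x \<in> V \<longleftrightarrow> i \<in> U" if "x \<in> topspace (X i)" for x
    proof -
      have "x \<in> topspace (zoom_space Y X)" using that i unfolding topspace_zoom_space by blast
      with 2 show ?thesis using mem_zoom_V_iff_collapse openin_subset collapse_piece[OF i that] by metis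
    qed
    then have "id -` V \<inter> topspace (X i) = (if i \<in> U then topspace (X i) else {})" by auto
    then show ?thesis by simp
  qed
qed

lemma continuous_map_zoom_section:
  assumes p: "\<And>i. i \<in> isolated_points Y \<Longrightarrow> p i \<in> topspace (X i)"
  defines "s \<equiv> \<lambda>y. if y \<in> isolated_points Y then p y else y"
  shows "continuous_map Y (zoom_space Y X) s"
proof -
  have s_in: "s y \<in> topspace (zoom_space Y X)" and collapse_s: "collapse (s y) = y"
    if "y \<in> topspace Y" for y
  proof -
    show "s y \<in> topspace (zoom_space Y X)"
      using p that unfolding s_def topspace_zoom_space nonisolated_points_def by auto
    show "collapse (s y) = y"
      using p that collapse_piece collapse_nonisolated unfolding s_def nonisolated_points_def by auto
  qed
  show ?thesis
    unfolding zoom_space_eq_generated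
  proof (rule continuous_on_generated_topo)
    show "s ` topspace Y \<subseteq> \<Union>(zoom_basis Y X)"
      using s_in unfolding topology_generated_by_topspace[symmetric] zoom_space_eq_generated[symmetric]
      by blast
    fix V assume "V \<in> zoom_basis Y X"
    then consider j where "j \<in> isolated_points Y" "openin (X j) V" | U where "openin Y U" "V = zoom_V Y X U"
      unfolding zoom_basis_def by blast
    then show "openin Y (s -` V \<inter> topspace Y)"
    proof cases
      case (1 j)
      have "s -` V \<inter> topspace Y \<subseteq> {j}"
      proof
        fix y assume y: "y \<in> s -` V \<inter> topspace Y"
        then have "s y \<in> topspace (X j)" using openin_subset[OF 1(2)] by blast
        then show "y \<in> {j}" using collapse_piece[OF 1(1)] collapse_s y by force
      qed
      moreover have "openin Y {j}" using 1(1) unfolding isolated_points_def by blast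
      ultimately show ?thesis by (metis openin_empty subset_singletonD)
    next
      case (2 U)
      have "s -` V \<inter> topspace Y = U"
      proof (intro set_eqI iffI)
        fix y assume "y \<in> s -` V \<inter> topspace Y"
        then show "y \<in> U"
          using 2 mem_zoom_V_iff_collapse[OF s_in openin_subset[OF 2(1)]] collapse_s by auto
      next
        fix y assume "y \<in> U"
        moreover have "y \<in> topspace Y" using \<open>y \<in> U\<close> openin_subset[OF 2(1)] by blast
        ultimately show "y \<in> s -` V \<inter> topspace Y"
          using 2 mem_zoom_V_iff_collapse[OF s_in openin_subset[OF 2(1)]] collapse_s by auto
      qed
      then show ?thesis using 2(1) by simp
    qed
  qed
qed

definition fibre_union :: "('a \<Rightarrow> 'a set) \<Rightarrow> 'a set" where
  "fibre_union A = nonisolated_points Y \<union> (\<Union>i\<in>isolated_points Y. A i)"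

lemma closedin_fibre_union:
  assumes "\<And>i. i \<in> isolated_points Y \<Longrightarrow> closedin (X i) (C i)"
  shows "closedin (zoom_space Y X) (fibre_union C)"
proof -
  have C_sub: "C i \<subseteq> topspace (X i)" if "i \<in> isolated_points Y" for i
    using assms[OF that] by (rule closedin_subset)
  have "topspace (zoom_space Y X) - fibre_union C = (\<Union>i\<in>isolated_points Y. topspace (X i) - C i)"
  proof (intro equalityI subsetI)
    fix x assume "x \<in> topspace (zoom_space Y X) - fibre_union C"
    then show "x \<in> (\<Union>i\<in>isolated_points Y. topspace (X i) - C i)"
      unfolding topspace_zoom_space fibre_union_def by blast
  next
    fix x assume "x \<in> (\<Union>i\<in>isolated_points Y. topspace (X i) - C i)"
    then obtain i where i: "i \<in> isolated_points Y" "x \<in> topspace (X i)" "x \<notin> C i" by blast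
    have "x \<notin> C j" if "j \<in> isolated_points Y" for j
      using i C_sub[OF that] piece_unique[OF i(1) that i(2)] by blast
    with i show "x \<in> topspace (zoom_space Y X) - fibre_union C"
      using piece_not_nonisolated unfolding topspace_zoom_space fibre_union_def by blast
  qed
  moreover have "openin (zoom_space Y X) (\<Union>i\<in>isolated_points Y. topspace (X i) - C i)"
  proof (intro openin_Union, clarify)
    fix i assume i: "i \<in> isolated_points Y"
    show "openin (zoom_space Y X) (topspace (X i) - C i)"
      by (rule openin_zoom_space_piece[of i Y X, OF i openin_diff[OF openin_topspace assms[OF i]]])
  qed
  moreover have "fibre_union C \<subseteq> topspace (zoom_space Y X)"
    using C_sub unfolding topspace_zoom_space fibre_union_def by blast
  ultimately show ?thesis unfolding closedin_def by simp
qed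

lemma fibre_union_UN: "fibre_union (\<lambda>i. \<Union>k. B i k) = (\<Union>k. fibre_union (\<lambda>i. B i k))"
  unfolding fibre_union_def by blast

lemma fibre_union_INT:
  fixes B :: "'a \<Rightarrow> nat \<Rightarrow> 'a set"
  assumes "\<And>i k. i \<in> isolated_points Y \<Longrightarrow> B i k \<subseteq> topspace (X i)"
  shows "fibre_union (\<lambda>i. \<Inter>k. B i k) = (\<Inter>k. fibre_union (\<lambda>i. B i k))"
proof (intro equalityI subsetI)
  fix z assume z: "z \<in> (\<Inter>k. fibre_union (\<lambda>i. B i k))"
  show "z \<in> fibre_union (\<lambda>i. \<Inter>k. B i k)"
  proof (cases "z \<in> nonisolated_points Y")
    case False
    then have "\<exists>i\<in>isolated_points Y. z \<in> B i k" for k using z unfolding fibre_union_def by blast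
    then obtain i where i: "i \<in> isolated_points Y" "z \<in> B i 0" by blast
    have "z \<in> B i k" for k
    proof -
      obtain j where j: "j \<in> isolated_points Y" "z \<in> B j k" using \<open>\<exists>i\<in>_. z \<in> B i k\<close> by blast
      have "j = i" using piece_unique[OF j(1) i(1)] j(2) i(2) assms j(1) i(1) by blast
      then show ?thesis using j by simp
    qed
    then show ?thesis using i(1) unfolding fibre_union_def by blast
  qed (simp add: fibre_union_def)
qed (auto simp: fibre_union_def)

lemma Fclass_top_fibre_union:
  assumes "\<And>i. i \<in> isolated_points Y \<Longrightarrow> Fclass (X i) (top::'o::{wellorder,order_top}) (A i)"
  shows "Fclass (zoom_space Y X) (top::'o) (fibre_union A)"
proof -
  have "\<forall>i\<in>isolated_points Y. \<exists>F. (\<forall>s. closedin (X i) (F s)) \<and>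
      A i = (\<Union>\<sigma>::nat \<Rightarrow> nat. \<Inter>k. F (map \<sigma> [0..<Suc k]))"
  proof
    fix i assume "i \<in> isolated_points Y"
    then obtain F where "\<forall>s. closedin (X i) (F s)" "A i = (\<Union>\<sigma>::nat \<Rightarrow> nat. \<Inter>k. F (map \<sigma> [0..<Suc k]))"
      using assms by (metis Fclass_topE)
    then show "\<exists>F. (\<forall>s. closedin (X i) (F s)) \<and> A i = (\<Union>\<sigma>::nat \<Rightarrow> nat. \<Inter>k. F (map \<sigma> [0..<Suc k]))"
      by blast
  qed
  from bchoice[OF this] obtain F where F: "\<forall>i\<in>isolated_points Y. (\<forall>s. closedin (X i) (F i s)) \<and>
      A i = (\<Union>\<sigma>::nat \<Rightarrow> nat. \<Inter>k. F i (map \<sigma> [0..<Suc k]))" by blast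
  have closed: "closedin (zoom_space Y X) (fibre_union (\<lambda>i. F i s))" for s
    using F by (intro closedin_fibre_union) blast
  have "fibre_union A = fibre_union (\<lambda>i. \<Union>\<sigma>::nat \<Rightarrow> nat. \<Inter>k. F i (map \<sigma> [0..<Suc k]))"
    using F unfolding fibre_union_def by simp
  also have "\<dots> = (\<Union>\<sigma>::nat \<Rightarrow> nat. \<Inter>k. fibre_union (\<lambda>i. F i (map \<sigma> [0..<Suc k])))"
    unfolding fibre_union_UN using F closedin_subset by (subst fibre_union_INT) blast+
  finally show ?thesis using Fclass.suslin[OF allI[OF closed]] by simp
qed

lemma Fclass_fibre_union_below_top:
  fixes \<alpha> :: "'o::{wellorder,order_top}"
  assumes ord: "omega1_plus_one_type TYPE('o)"
  shows "\<alpha> < top \<Longrightarrow> \<forall>i\<in>isolated_points Y. Fclass (X i) \<alpha> (A i) \<Longrightarrow>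
    Fclass (zoom_space Y X) \<alpha> (fibre_union A)"
proof (induction \<alpha> arbitrary: A rule: less_induct)
  case (less \<alpha>)
  have fibre_union_below: "Fclass (zoom_space Y X) \<beta> (fibre_union (\<lambda>i. B i k))"
    if "\<beta> < \<alpha>" "\<forall>i\<in>isolated_points Y. Fclass (X i) \<beta> (B i k)" for \<beta> B and k :: nat
    using less.IH[OF that(1) _ that(2)] that(1) less.prems(1) by simp
  show ?case
  proof (cases "\<forall>\<beta>. \<alpha> \<le> \<beta>")
    case True
    obtain \<beta>\<^sub>0 :: 'o where "\<beta>\<^sub>0 < top" using omega1_plus_one_type_nontrivial[OF ord] .
    then have "closedin (X i) (A i)" if "i \<in> isolated_points Y" for i
      using less.prems(2) that Fclass_bottom_closedin[OF _ True] by blast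
    then show ?thesis by (intro Fclass.zero[OF True] closedin_fibre_union)
  next
    case nonbottom: False
    show ?thesis
    proof (cases "ord_odd \<alpha>")
      case True
      obtain B where B: "\<forall>k::nat. \<exists>\<beta><\<alpha>. \<forall>i\<in>isolated_points Y. Fclass (X i) \<beta> (B i k)"
        "\<forall>i\<in>isolated_points Y. A i = (\<Union>k. B i k)"
        using Fclass_family_Union_uniform_levels[OF less.prems(2,1) nonbottom True] .
      have "fibre_union A = (\<Union>k. fibre_union (\<lambda>i. B i k))"
        unfolding fibre_union_UN[symmetric] using B(2) unfolding fibre_union_def by simp
      moreover have "Fclass (zoom_space Y X) \<alpha> (\<Union>k. fibre_union (\<lambda>i. B i k))"
        using B(1) fibre_union_below by (intro Fclass.odd_union[OF less.prems(1) nonbottom True]) blast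
      ultimately show ?thesis by simp
    next
      case False
      obtain B where B: "\<forall>k::nat. \<exists>\<beta><\<alpha>. \<forall>i\<in>isolated_points Y. Fclass (X i) \<beta> (B i k)"
        "\<forall>i\<in>isolated_points Y. A i = (\<Inter>k. B i k)"
        using Fclass_family_Inter_uniform_levels[OF less.prems(2,1) nonbottom False
            omega1_plus_one_type_countable_below[OF ord less.prems(1)]] .
      have "fibre_union A = fibre_union (\<lambda>i. \<Inter>k. B i k)"
        using B(2) unfolding fibre_union_def by simp
      also have "\<dots> = (\<Inter>k. fibre_union (\<lambda>i. B i k))"
        by (rule fibre_union_INT) (use B(1) Fclass_subset_topspace in blast)
      finally have "fibre_union A = (\<Inter>k. fibre_union (\<lambda>i. B i k))" .
      moreover have "Fclass (zoom_space Y X) \<alpha> (\<Inter>k. fibre_union (\<lambda>i. B i k))"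
        using B(1) fibre_union_below by (intro Fclass.even_inter[OF less.prems(1) nonbottom False]) blast
      ultimately show ?thesis by simp
    qed
  qed
qed

lemma Fclass_fibre_union:
  fixes \<alpha> :: "'o::{wellorder,order_top}"
  assumes "omega1_plus_one_type TYPE('o)" "\<forall>i\<in>isolated_points Y. Fclass (X i) \<alpha> (A i)"
  shows "Fclass (zoom_space Y X) \<alpha> (fibre_union A)"
proof (cases "\<alpha> = top")
  case True
  then show ?thesis using assms(2) Fclass_top_fibre_union by blast
next
  case False
  then show ?thesis using Fclass_fibre_union_below_top[OF assms(1)] assms(2) top.not_eq_extremum by blast
qed

end

section \<open>Zoom spaces over a dense subspace\<close>

lemma isolated_points_dense_subtopology:
  assumes "t1_space T" "S \<subseteq> topspace T" "T closure_of S = topspace T"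
  shows "isolated_points (subtopology T S) = isolated_points T"
proof (intro set_eqI iffI)
  fix y assume "y \<in> isolated_points (subtopology T S)"
  then have y: "y \<in> S" "openin (subtopology T S) {y}"
    using assms(2) unfolding isolated_points_def by (auto simp: Int_absorb1)
  then obtain U where U: "openin T U" "{y} = U \<inter> S" unfolding openin_subtopology by blast
  have "y \<in> topspace T" using y(1) assms(2) by blast
  then have "openin T (U - {y})"
    using U(1) assms(1) by (simp add: openin_diff t1_space_closedin_singleton)
  moreover have "S \<inter> (U - {y}) = {}" using U(2) by blast
  ultimately have "U - {y} = {}" using assms(3) dense_intersects_open by blast
  moreover have "y \<in> U" using U(2) by blast
  ultimately have "U = {y}" by blast
  then show "y \<in> isolated_points T" using U(1) \<open>y \<in> topspace T\<close> unfolding isolated_points_def by auto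
next
  fix y assume "y \<in> isolated_points T"
  then have y: "y \<in> topspace T" "openin T {y}" unfolding isolated_points_def by auto
  then have "S \<inter> {y} \<noteq> {}" using assms(3) dense_intersects_open by blast
  then have "y \<in> S" by blast
  moreover from this have "openin (subtopology T S) {y}"
    using y(2) unfolding openin_subtopology by blast
  ultimately show "y \<in> isolated_points (subtopology T S)"
    using y(1) unfolding isolated_points_def by auto
qed

locale zoom_extension =
  fixes Y Yt :: "'a topology" and X Xt :: "'a \<Rightarrow> 'a topology"
  assumes t1: "t1_space Yt"
    and subspace: "topspace Y \<subseteq> topspace Yt" "Y = subtopology Yt (topspace Y)"
    and dense: "Yt closure_of topspace Y = topspace Yt"
    and pieces_nonempty: "\<And>i. i \<in> isolated_points Y \<Longrightarrow> topspace (X i) \<noteq> {}"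
    and pieces_subspace: "\<And>i. i \<in> isolated_points Y \<Longrightarrow>
      topspace (X i) \<subseteq> topspace (Xt i) \<and> X i = subtopology (Xt i) (topspace (X i))"
    and ext_pieces_disjoint: "\<And>i j. i \<in> isolated_points Y \<Longrightarrow> j \<in> isolated_points Y \<Longrightarrow> i \<noteq> j \<Longrightarrow>
      topspace (Xt i) \<inter> topspace (Xt j) = {}"
    and ext_pieces_disjoint_nonisolated: "\<And>i. i \<in> isolated_points Y \<Longrightarrow>
      topspace (Xt i) \<inter> nonisolated_points Yt = {}"
begin

lemma isolated_points_eq: "isolated_points Yt = isolated_points Y"
  using isolated_points_dense_subtopology[OF t1 subspace(1) dense] subspace(2) by simp

sublocale disjoint_zoom Yt Xt
  by unfold_locales (use ext_pieces_disjoint ext_pieces_disjoint_nonisolated in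
    \<open>simp_all add: isolated_points_eq\<close>)

lemma nonisolated_points_subset: "nonisolated_points Y \<subseteq> nonisolated_points Yt"
  using subspace(1) unfolding nonisolated_points_def isolated_points_eq by blast

lemma piece_inter_topspace_zoom:
  assumes "i \<in> isolated_points Y"
  shows "topspace (Xt i) \<inter> topspace (zoom_space Y X) = topspace (X i)"
proof -
  have "x \<notin> nonisolated_points Y" if "x \<in> topspace (Xt i)" for x
    using that assms nonisolated_points_subset piece_not_nonisolated isolated_points_eq by blast
  moreover have "x \<in> topspace (X i)" if "x \<in> topspace (Xt i)" "j \<in> isolated_points Y" "x \<in> topspace (X j)" for x j
    using that assms pieces_subspace piece_unique isolated_points_eq by blast
  ultimately show ?thesis
    using assms pieces_subspace unfolding topspace_zoom_space by blast
qed

lemma topspace_zoom_space_subset: "topspace (zoom_space Y X) \<subseteq> topspace (zoom_space Yt Xt)"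
  using nonisolated_points_subset pieces_subspace unfolding topspace_zoom_space isolated_points_eq by blast

lemma collapse_zoom_subspace:
  assumes "x \<in> topspace (zoom_space Y X)"
  obtains "x \<in> nonisolated_points Y" "collapse x = x"
  | i where "i \<in> isolated_points Y" "x \<in> topspace (X i)" "collapse x = i"
proof (cases "x \<in> nonisolated_points Y")
  case True
  then show ?thesis using that(1) nonisolated_points_subset collapse_nonisolated by blast
next
  case False
  then obtain i where i: "i \<in> isolated_points Y" "x \<in> topspace (X i)"
    using assms unfolding topspace_zoom_space by blast
  then have "collapse x = i" using collapse_piece pieces_subspace isolated_points_eq by blast
  then show ?thesis using that(2) i by blast
qed

lemma mem_zoom_V_subspace_iff_collapse:
  assumes "x \<in> topspace (zoom_space Y X)"
  shows "x \<in> zoom_V Y X (U \<inter> topspace Y) \<longleftrightarrow> collapse x \<in> U"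
  using assms
proof (cases rule: collapse_zoom_subspace)
  case 1
  have "x \<notin> topspace (X j)" if "j \<in> isolated_points Y" for j
    using 1(1) that nonisolated_points_subset pieces_subspace piece_not_nonisolated isolated_points_eq
    by blast
  with 1(1) show ?thesis unfolding zoom_V_def 1(2) nonisolated_points_def by blast
next
  case (2 i)
  have "x \<notin> nonisolated_points Y"
    using 2(1,2) nonisolated_points_subset pieces_subspace piece_not_nonisolated isolated_points_eq
    by blast
  then have "x \<in> zoom_V Y X (U \<inter> topspace Y) \<longleftrightarrow>
      (\<exists>j\<in>U \<inter> topspace Y \<inter> isolated_points Y. x \<in> topspace (X j))"
    unfolding zoom_V_def nonisolated_points_def by blast
  also have "\<dots> \<longleftrightarrow> i \<in> U"
  proof
    assume "\<exists>j\<in>U \<inter> topspace Y \<inter> isolated_points Y. x \<in> topspace (X j)"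
    then obtain j where "j \<in> U" "j \<in> isolated_points Y" "x \<in> topspace (X j)" by blast
    moreover from this have "j = i"
      using 2(1,2) pieces_subspace piece_unique isolated_points_eq by blast
    ultimately show "i \<in> U" by simp
  next
    assume "i \<in> U"
    then show "\<exists>j\<in>U \<inter> topspace Y \<inter> isolated_points Y. x \<in> topspace (X j)"
      using 2(1,2) isolated_points_subset_topspace[of Y] by (intro bexI[of _ i]) auto
  qed
  finally show ?thesis unfolding 2(3) .
qed

lemma zoom_V_inter_topspace_zoom:
  assumes "U \<subseteq> topspace Yt"
  shows "zoom_V Yt Xt U \<inter> topspace (zoom_space Y X) = zoom_V Y X (U \<inter> topspace Y)"
proof (intro set_eqI iffI)
  fix x assume x: "x \<in> zoom_V Yt Xt U \<inter> topspace (zoom_space Y X)"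
  then have x_in: "x \<in> topspace (zoom_space Y X)" by blast
  have "collapse x \<in> U"
    using mem_zoom_V_iff_collapse[OF subsetD[OF topspace_zoom_space_subset x_in] assms] x by blast
  then show "x \<in> zoom_V Y X (U \<inter> topspace Y)" using mem_zoom_V_subspace_iff_collapse[OF x_in] by blast
next
  fix x assume x: "x \<in> zoom_V Y X (U \<inter> topspace Y)"
  have "zoom_V Y X (U \<inter> topspace Y) \<subseteq> topspace (zoom_space Y X)"
    unfolding topspace_zoom_space zoom_V_topspace[symmetric] by (rule zoom_V_mono) blast
  with x have x_in: "x \<in> topspace (zoom_space Y X)" by blast
  with x have "collapse x \<in> U" using mem_zoom_V_subspace_iff_collapse[OF x_in] by blast
  then show "x \<in> zoom_V Yt Xt U \<inter> topspace (zoom_space Y X)"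
    using mem_zoom_V_iff_collapse[OF subsetD[OF topspace_zoom_space_subset x_in] assms] x_in by blast
qed

lemma openin_Y_iff: "openin Y U \<longleftrightarrow> (\<exists>T. openin Yt T \<and> U = T \<inter> topspace Y)"
  by (subst subspace(2)) (simp add: openin_subtopology)

lemma openin_piece_iff:
  assumes "i \<in> isolated_points Y"
  shows "openin (X i) V \<longleftrightarrow> (\<exists>T. openin (Xt i) T \<and> V = T \<inter> topspace (X i))"
  using pieces_subspace[OF assms] by (metis openin_subtopology)

lemma zoom_basis_restrict:
  "zoom_basis Y X = (\<lambda>b. b \<inter> topspace (zoom_space Y X)) ` zoom_basis Yt Xt"
proof (intro equalityI subsetI)
  fix V assume "V \<in> zoom_basis Y X"
  then consider i where "i \<in> isolated_points Y" "openin (X i) V" | U where "openin Y U" "V = zoom_V Y X U"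
    unfolding zoom_basis_def by blast
  then show "V \<in> (\<lambda>b. b \<inter> topspace (zoom_space Y X)) ` zoom_basis Yt Xt"
  proof cases
    case (1 i)
    then obtain T where T: "openin (Xt i) T" "V = T \<inter> topspace (X i)" using openin_piece_iff by blast
    have "T \<inter> topspace (zoom_space Y X) = V"
      using T piece_inter_topspace_zoom[OF 1(1)] openin_subset[OF T(1)] by blast
    moreover have "T \<in> zoom_basis Yt Xt" using 1(1) T(1) unfolding zoom_basis_def isolated_points_eq by blast
    ultimately show ?thesis by blast
  next
    case (2 U)
    then obtain T where T: "openin Yt T" "U = T \<inter> topspace Y" using openin_Y_iff by blast
    have "zoom_V Yt Xt T \<inter> topspace (zoom_space Y X) = V"
      using zoom_V_inter_topspace_zoom[OF openin_subset[OF T(1)]] 2(2) T(2) by simp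
    moreover have "zoom_V Yt Xt T \<in> zoom_basis Yt Xt" using T(1) unfolding zoom_basis_def by blast
    ultimately show ?thesis by blast
  qed
next
  fix W assume "W \<in> (\<lambda>b. b \<inter> topspace (zoom_space Y X)) ` zoom_basis Yt Xt"
  then obtain b where b: "b \<in> zoom_basis Yt Xt" "W = b \<inter> topspace (zoom_space Y X)" by blast
  then consider i where "i \<in> isolated_points Y" "openin (Xt i) b" | U where "openin Yt U" "b = zoom_V Yt Xt U"
    unfolding zoom_basis_def isolated_points_eq by blast
  then show "W \<in> zoom_basis Y X"
  proof cases
    case (1 i)
    have "W = b \<inter> topspace (X i)"
      using b(2) piece_inter_topspace_zoom[OF 1(1)] openin_subset[OF 1(2)] by blast
    then have "openin (X i) W" using openin_piece_iff[OF 1(1)] 1(2) by blast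
    then show ?thesis using 1(1) unfolding zoom_basis_def by blast
  next
    case (2 U)
    have "W = zoom_V Y X (U \<inter> topspace Y)"
      using b(2) 2(2) zoom_V_inter_topspace_zoom[OF openin_subset[OF 2(1)]] by simp
    moreover have "openin Y (U \<inter> topspace Y)" using openin_Y_iff 2(1) by blast
    ultimately show ?thesis unfolding zoom_basis_def by blast
  qed
qed

lemma zoom_space_subtopology:
  "zoom_space Y X = subtopology (zoom_space Yt Xt) (topspace (zoom_space Y X))"
  unfolding zoom_space_eq_generated[of Yt] subtopology_topology_generated_by zoom_basis_restrict[symmetric]
  by (rule zoom_space_eq_generated)

lemma zoom_section_preimage:
  assumes "\<And>i. i \<in> isolated_points Y \<Longrightarrow> p i \<in> topspace (X i)"
  shows "{y \<in> topspace Yt. (if y \<in> isolated_points Y then p y else y) \<in> topspace (zoom_space Y X)}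
    = topspace Y"
proof (intro equalityI subsetI)
  fix y assume y: "y \<in> {y \<in> topspace Yt. (if y \<in> isolated_points Y then p y else y) \<in> topspace (zoom_space Y X)}"
  show "y \<in> topspace Y"
  proof (cases "y \<in> isolated_points Y")
    case False
    then have "y \<in> nonisolated_points Yt" "y \<in> topspace (zoom_space Y X)"
      using y unfolding nonisolated_points_def isolated_points_eq by auto
    moreover have "y \<notin> topspace (X j)" if "j \<in> isolated_points Y" for j
      using piece_not_nonisolated[of j y] pieces_subspace[OF that] that \<open>y \<in> nonisolated_points Yt\<close>
      unfolding isolated_points_eq by blast
    ultimately show ?thesis unfolding topspace_zoom_space nonisolated_points_def by blast
  qed (use isolated_points_subset_topspace[of Y] in blast)
next
  fix y assume "y \<in> topspace Y"
  moreover have "p y \<in> topspace (zoom_space Y X)" if "y \<in> isolated_points Y"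
    using assms[OF that] that unfolding topspace_zoom_space by blast
  ultimately show "y \<in> {y \<in> topspace Yt. (if y \<in> isolated_points Y then p y else y) \<in> topspace (zoom_space Y X)}"
    using subspace(1) unfolding topspace_zoom_space nonisolated_points_def by auto
qed

lemma topspace_zoom_subspace_decomposition:
  "topspace (zoom_space Y X) =
    {z \<in> topspace (zoom_space Yt Xt). collapse z \<in> topspace Y} \<inter> fibre_union (\<lambda>i. topspace (X i))"
proof (intro equalityI subsetI)
  fix z assume z: "z \<in> topspace (zoom_space Y X)"
  have "collapse z \<in> topspace Y"
    using z by (cases rule: collapse_zoom_subspace)
      (use isolated_points_subset_topspace[of Y] in \<open>auto simp: nonisolated_points_def\<close>)
  moreover have "z \<in> fibre_union (\<lambda>i. topspace (X i))"
    using z nonisolated_points_subset unfolding topspace_zoom_space fibre_union_def isolated_points_eq by blast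
  ultimately show "z \<in> {z \<in> topspace (zoom_space Yt Xt). collapse z \<in> topspace Y} \<inter> fibre_union (\<lambda>i. topspace (X i))"
    using z topspace_zoom_space_subset by blast
next
  fix z assume z: "z \<in> {z \<in> topspace (zoom_space Yt Xt). collapse z \<in> topspace Y} \<inter> fibre_union (\<lambda>i. topspace (X i))"
  show "z \<in> topspace (zoom_space Y X)"
  proof (cases "z \<in> nonisolated_points Yt")
    case True
    then have "z \<in> topspace Y" "z \<notin> isolated_points Y"
      using z collapse_nonisolated unfolding nonisolated_points_def isolated_points_eq by auto
    then show ?thesis unfolding topspace_zoom_space nonisolated_points_def by blast
  next
    case False
    then show ?thesis using z unfolding topspace_zoom_space fibre_union_def isolated_points_eq by blast
  qed
qed

lemma Fclass_zoom_subspace_iff: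
  fixes \<alpha> :: "'o::{wellorder,order_top}"
  assumes ord: "omega1_plus_one_type TYPE('o)"
  shows "Fclass (zoom_space Yt Xt) \<alpha> (topspace (zoom_space Y X)) \<longleftrightarrow>
    Fclass Yt \<alpha> (topspace Y) \<and> (\<forall>i\<in>isolated_points Y. Fclass (Xt i) \<alpha> (topspace (X i)))"
proof
  assume F: "Fclass (zoom_space Yt Xt) \<alpha> (topspace (zoom_space Y X))"
  have "\<forall>i\<in>isolated_points Y. \<exists>x. x \<in> topspace (X i)" using pieces_nonempty by blast
  from bchoice[OF this] obtain p where p: "\<And>i. i \<in> isolated_points Y \<Longrightarrow> p i \<in> topspace (X i)"
    by blast
  have "continuous_map Yt (zoom_space Yt Xt) (\<lambda>y. if y \<in> isolated_points Y then p y else y)"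
    using continuous_map_zoom_section[of p] p pieces_subspace unfolding isolated_points_eq by blast
  from Fclass_continuous_map_preimage[OF F this] have "Fclass Yt \<alpha> (topspace Y)"
    by (simp add: zoom_section_preimage[OF p])
  moreover have "Fclass (Xt i) \<alpha> (topspace (X i))" if "i \<in> isolated_points Y" for i
    using Fclass_continuous_map_preimage[OF F continuous_map_piece_inclusion[of i]] that
    unfolding isolated_points_eq id_apply Int_def[symmetric] piece_inter_topspace_zoom[OF that] by simp
  ultimately show "Fclass Yt \<alpha> (topspace Y) \<and> (\<forall>i\<in>isolated_points Y. Fclass (Xt i) \<alpha> (topspace (X i)))"
    by blast
next
  assume F: "Fclass Yt \<alpha> (topspace Y) \<and> (\<forall>i\<in>isolated_points Y. Fclass (Xt i) \<alpha> (topspace (X i)))"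
  obtain \<beta>\<^sub>0 :: 'o where "\<beta>\<^sub>0 < top" using omega1_plus_one_type_nontrivial[OF ord] .
  have "Fclass (zoom_space Yt Xt) \<alpha> {z \<in> topspace (zoom_space Yt Xt). collapse z \<in> topspace Y}"
    using F Fclass_continuous_map_preimage continuous_map_collapse by blast
  moreover have "Fclass (zoom_space Yt Xt) \<alpha> (fibre_union (\<lambda>i. topspace (X i)))"
    using F Fclass_fibre_union[OF ord, of \<alpha> "\<lambda>i. topspace (X i)"] unfolding isolated_points_eq by blast
  ultimately show "Fclass (zoom_space Yt Xt) \<alpha> (topspace (zoom_space Y X))"
    unfolding topspace_zoom_subspace_decomposition using \<open>\<beta>\<^sub>0 < top\<close> by (rule Fclass_Int)
qed

end

theorem proposition4p3:
  fixes Y Yt :: "'a topology"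
    and X Xt :: "'a \<Rightarrow> 'a topology"
  assumes ord: "omega1_plus_one_type TYPE('o::{wellorder,order_top})"
    and tych_Yt: "tychonoff_space Yt"
    and tych_Xt: "\<forall>i \<in> isolated_points Y. tychonoff_space (Xt i)"
    and Y_sub: "topspace Y \<subseteq> topspace Yt" "Y = subtopology Yt (topspace Y)"
    and Y_dense: "Yt closure_of (topspace Y) = topspace Yt"
    and X_ne: "\<forall>i \<in> isolated_points Y. topspace (X i) \<noteq> {}"
    and X_sub: "\<forall>i \<in> isolated_points Y. topspace (X i) \<subseteq> topspace (Xt i)
                   \<and> X i = subtopology (Xt i) (topspace (X i))"
    and Xt_disj: "\<forall>i \<in> isolated_points Y. \<forall>j \<in> isolated_points Y.
                   i \<noteq> j \<longrightarrow> topspace (Xt i) \<inter> topspace (Xt j) = {}"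
    and Xt_disj_Yt: "\<forall>i \<in> isolated_points Y. topspace (Xt i) \<inter> nonisolated_points Yt = {}"
  shows "topspace (zoom_space Y X) \<subseteq> topspace (zoom_space Yt Xt)
     \<and> zoom_space Y X = subtopology (zoom_space Yt Xt) (topspace (zoom_space Y X))
     \<and> ((Compl_defined (topspace (zoom_space Y X)) (zoom_space Yt Xt) TYPE('o)
          \<or> (Compl_defined (topspace Y) Yt TYPE('o)
             \<and> (\<forall>i \<in> isolated_points Y. Compl_defined (topspace (X i)) (Xt i) TYPE('o))))
        \<longrightarrow> Compl_defined (topspace (zoom_space Y X)) (zoom_space Yt Xt) TYPE('o)
          \<and> Compl_defined (topspace Y) Yt TYPE('o)
          \<and> (\<forall>i \<in> isolated_points Y. Compl_defined (topspace (X i)) (Xt i) TYPE('o))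
          \<and> (Complexity (topspace (zoom_space Y X)) (zoom_space Yt Xt) :: 'o)
             = max (Complexity (topspace Y) Yt)
                   (ord_sup ((\<lambda>i. Complexity (topspace (X i)) (Xt i)) ` isolated_points Y)))"
proof -
  interpret zoom_extension Y Yt X Xt
  proof
    show "t1_space Yt" using tych_Yt unfolding tychonoff_space_def by blast
  qed (use Y_sub Y_dense X_ne X_sub Xt_disj Xt_disj_Yt in blast)+
  have Fclass_iff: "\<And>\<alpha>::'o. Fclass (zoom_space Yt Xt) \<alpha> (topspace (zoom_space Y X)) \<longleftrightarrow>
      Fclass Yt \<alpha> (topspace Y) \<and> (\<forall>i\<in>isolated_points Y. Fclass (Xt i) \<alpha> (topspace (X i)))"
    by (rule Fclass_zoom_subspace_iff[OF ord])
  show ?thesis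
    unfolding Compl_defined_def
  proof (intro conjI impI topspace_zoom_space_subset zoom_space_subtopology)
    assume "Fclass (zoom_space Yt Xt) (top::'o) (topspace (zoom_space Y X)) \<or>
      Fclass Yt (top::'o) (topspace Y) \<and> (\<forall>i\<in>isolated_points Y. Fclass (Xt i) (top::'o) (topspace (X i)))"
    then have defined: "Fclass (zoom_space Yt Xt) (top::'o) (topspace (zoom_space Y X))"
      using Fclass_iff by blast
    then show "Fclass (zoom_space Yt Xt) (top::'o) (topspace (zoom_space Y X))"
      and "Fclass Yt (top::'o) (topspace Y)"
      and "\<forall>i\<in>isolated_points Y. Fclass (Xt i) (top::'o) (topspace (X i))"
      using Fclass_iff by blast+
    show "(Complexity (topspace (zoom_space Y X)) (zoom_space Yt Xt) :: 'o) =
        max (Complexity (topspace Y) Yt) (ord_sup ((\<lambda>i. Complexity (topspace (X i)) (Xt i)) ` isolated_points Y))"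
      by (rule Complexity_eq_max_ord_sup[OF Fclass_iff defined])
  qed
qed

end
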